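(* For every positive integer $n$, the number of modified balanced partitions of size $n$ equals the Catalan number $C_n=\frac{1}{n+1}\binom{2n}{n}$. More precisely, the map sending $(\,\mid\,)\mapsto N^nE^n$ and a nonempty $(a_1,\ldots,a_l\mid b_1,\ldots,b_l)$ to the word \[ N^{b_l}E^{a_l+1}N^{b_{l-1}-b_l}E^{a_{l-1}-a_l}\cdots N^{b_1-b_2}E^{a_1-a_2}N^{n-b_1}E^{n-a_1-1} \] is a bijection from modified balanced partitions of size $n$ to Dyck paths of length $2n$ (lattice paths from $(0,0)$ to $(n,n)$ with unit north steps $N$ and east steps $E$ never going below the diagonal $y=x$).
   Context: For a partition $\lambda$ with conjugate $\lambda'$ and Durfee square side $l=\max\{i:\lambda_i\ge i\}$, its Frobenius notation is $(\lambda_1-1,\ldots,\lambda_l-l\mid \lambda'_1-1,\ldots,\lambda'_l-l)$; the empty partition is $(\,\mid\,)$. A modified balanced partition of size $n$ is a partition $\lambda=(\lambda_1,\ldots,\lambda_n)$ with $n$ parts, zero parts allowed, such that $\lambda_1\le n-1$ and $\lambda_i<\lambda'_i$ whenever $\lambda_i\ge i$ (equivalently, in Frobenius notation, $a_i<b_i$ for all $i$). *)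

theory Defs
  imports Complex_Main
begin

text \<open>A partition with n parts (zero parts allowed) is a weakly decreasing list
  of naturals of length n; part i (1-indexed) is lam ! (i-1), and 0 beyond.\<close>

datatype step = N | E

definition part :: "nat list \<Rightarrow> nat \<Rightarrow> nat" where
  "part lam i = (if 1 \<le> i \<and> i \<le> length lam then lam ! (i - 1) else 0)"

definition conjpart :: "nat list \<Rightarrow> nat \<Rightarrow> nat" where
  "conjpart lam i = card {j. 1 \<le> j \<and> j \<le> length lam \<and> i \<le> part lam j}"

definition durfee :: "nat list \<Rightarrow> nat" where
  "durfee lam = Max ({0} \<union> {i. 1 \<le> i \<and> i \<le> length lam \<and> i \<le> part lam i})"

definition frob_a :: "nat list \<Rightarrow> nat \<Rightarrow> nat" where
  "frob_a lam i = part lam i - i"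

definition frob_b :: "nat list \<Rightarrow> nat \<Rightarrow> nat" where
  "frob_b lam i = conjpart lam i - i"

definition is_partition :: "nat list \<Rightarrow> bool" where
  "is_partition lam \<longleftrightarrow> sorted_wrt (\<ge>) lam"

definition modified_balanced :: "nat \<Rightarrow> nat list \<Rightarrow> bool" where
  "modified_balanced n lam \<longleftrightarrow>
     is_partition lam \<and> length lam = n \<and> part lam 1 \<le> n - 1 \<and>
     (\<forall>i. 1 \<le> i \<and> i \<le> n \<and> i \<le> part lam i \<longrightarrow> part lam i < conjpart lam i)"

definition count_step :: "step \<Rightarrow> step list \<Rightarrow> nat" where
  "count_step s w = length (filter (\<lambda>x. x = s) w)"

definition dyck_path :: "nat \<Rightarrow> step list \<Rightarrow> bool" where
  "dyck_path n w \<longleftrightarrow> length w = 2 * n \<and> count_step N w = n \<and> count_step E w = n \<and>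
     (\<forall>k \<le> length w. count_step E (take k w) \<le> count_step N (take k w))"

definition mbp_word :: "nat \<Rightarrow> nat list \<Rightarrow> step list" where
  "mbp_word n lam =
    (let l = durfee lam; a = frob_a lam; b = frob_b lam in
     if l = 0 then replicate n N @ replicate n E
     else replicate (b l) N @ replicate (a l + 1) E
          @ concat (map (\<lambda>i. replicate (b i - b (i + 1)) N @ replicate (a i - a (i + 1)) E)
                        (rev [1..<l]))
          @ replicate (n - b 1) N @ replicate (n - a 1 - 1) E)"

end

theory Submission
  imports Defs
begin

text \<open>
  Record a lattice path by its corners: the points (number of N steps, number of E steps) reached
  at the end of each maximal block of N steps followed by E steps. For a Dyck path the corners form
  a strictly increasing chain in the region y \<le> x < n, completed by the end point (n, n), and the
  path is recovered from the chain. For a partition with Frobenius coordinates (a | b) both a and b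
  decrease strictly, and the condition a_i < b_i says precisely that the points (b_i, a_i + 1),
  i = l, \<dots>, 1, form such a chain; conversely, strictly decreasing data (a | b) are the Frobenius
  coordinates of exactly one partition with n parts. The word of the theorem is the path through
  these corners. Finally, the reflection principle counts the Dyck paths.
\<close>

section \<open>Dyck paths and the reflection principle\<close>

lemma count_step_Nil [simp]: "count_step s [] = 0"
  by (simp add: count_step_def)

lemma count_step_Cons [simp]:
  "count_step s (x # w) = (if x = s then Suc (count_step s w) else count_step s w)"
  by (simp add: count_step_def)

lemma count_step_append [simp]: "count_step s (u @ v) = count_step s u + count_step s v"
  by (simp add: count_step_def)

lemma count_step_replicate [simp]: "count_step s (replicate k t) = (if s = t then k else 0)"
  by (induct k) auto

lemma length_eq_count_N_plus_count_E: "length w = count_step N w + count_step E w"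
proof (induct w)
  case (Cons x w)
  then show ?case by (cases x) auto
qed simp

fun stays_nonneg :: "nat \<Rightarrow> step list \<Rightarrow> bool" where
  "stays_nonneg h [] = True"
| "stays_nonneg h (N # w) = stays_nonneg (Suc h) w"
| "stays_nonneg h (E # w) = (0 < h \<and> stays_nonneg (h - 1) w)"

lemma stays_nonneg_replicate_N_append:
  "stays_nonneg h (replicate p N @ w) = stays_nonneg (h + p) w"
  by (induct p arbitrary: h) auto

lemma stays_nonneg_replicate_E_append:
  "stays_nonneg h (replicate q E @ w) = (q \<le> h \<and> stays_nonneg (h - q) w)"
proof (induct q arbitrary: h)
  case (Suc q)
  then show ?case by (cases h) simp_all
qed simp

lemma all_atMost_Suc_iff: "(\<forall>k\<le>Suc m. P k) \<longleftrightarrow> P 0 \<and> (\<forall>k\<le>m. P (Suc k))"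
  by (metis Suc_le_mono not0_implies_Suc zero_le)

lemma stays_nonneg_iff_prefixes:
  "stays_nonneg h w \<longleftrightarrow>
     (\<forall>k\<le>length w. count_step E (take k w) \<le> h + count_step N (take k w))"
proof (induct w arbitrary: h)
  case (Cons x w)
  have "(\<forall>k\<le>length (x # w). count_step E (take k (x # w)) \<le> h + count_step N (take k (x # w)))
    \<longleftrightarrow> (\<forall>k\<le>length w. count_step E (x # take k w) \<le> h + count_step N (x # take k w))"
    unfolding length_Cons all_atMost_Suc_iff by simp
  also have "\<dots> \<longleftrightarrow> stays_nonneg h (x # w)"
    using Cons[of "Suc h"] Cons[of "h - 1"] by (cases x; cases h) auto
  finally show ?case ..
qed simp

lemma dyck_path_iff_stays_nonneg:
  "dyck_path n w \<longleftrightarrow> count_step N w = n \<and> count_step E w = n \<and> stays_nonneg 0 w"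
  unfolding dyck_path_def stays_nonneg_iff_prefixes
  using length_eq_count_N_plus_count_E[of w] by auto

definition ballot_words :: "nat \<Rightarrow> nat \<Rightarrow> nat \<Rightarrow> step list set" where
  "ballot_words h a b = {w. count_step N w = a \<and> count_step E w = b \<and> stays_nonneg h w}"

lemma finite_ballot_words: "finite (ballot_words h a b)"
proof (rule finite_subset)
  show "ballot_words h a b \<subseteq> {w. set w \<subseteq> UNIV \<and> length w = a + b}"
    unfolding ballot_words_def using length_eq_count_N_plus_count_E by auto
  have "(UNIV :: step set) \<subseteq> {N, E}"
    using step.exhaust by auto
  then have "finite (UNIV :: step set)"
    by (rule finite_subset) simp
  then show "finite {w. set w \<subseteq> (UNIV :: step set) \<and> length w = a + b}"
    by (rule finite_lists_length_eq)
qed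

lemma ballot_words_0_0: "ballot_words h 0 0 = {[]}"
proof
  show "ballot_words h 0 0 \<subseteq> {[]}"
  proof
    fix w
    assume "w \<in> ballot_words h 0 0"
    then have "length w = 0"
      unfolding ballot_words_def length_eq_count_N_plus_count_E[of w] by simp
    then show "w \<in> {[]}"
      by simp
  qed
qed (simp add: ballot_words_def)

lemma ballot_words_first_step:
  assumes "0 < a + b"
  shows "ballot_words h a b =
    (if 0 < a then (#) N ` ballot_words (Suc h) (a - 1) b else {}) \<union>
    (if 0 < h \<and> 0 < b then (#) E ` ballot_words (h - 1) a (b - 1) else {})"
    (is "_ = ?Nfirst \<union> ?Efirst")
proof
  show "ballot_words h a b \<subseteq> ?Nfirst \<union> ?Efirst"
  proof
    fix w assume w: "w \<in> ballot_words h a b"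
    then obtain x w' where "w = x # w'"
      using assms length_eq_count_N_plus_count_E[of w] unfolding ballot_words_def
      by (cases w) auto
    with w show "w \<in> ?Nfirst \<union> ?Efirst"
      unfolding ballot_words_def by (cases x) auto
  qed
qed (auto simp: ballot_words_def)

lemma card_ballot_words_first_step:
  assumes "0 < a + b"
  shows "card (ballot_words h a b) =
    (if 0 < a then card (ballot_words (Suc h) (a - 1) b) else 0) +
    (if 0 < h \<and> 0 < b then card (ballot_words (h - 1) a (b - 1)) else 0)"
  unfolding ballot_words_first_step[OF assms]
  by (subst card_Un_disjoint) (auto simp: finite_ballot_words card_image)

text \<open>The reflection principle: the subtracted binomial counts the walks that do hit height -1.\<close>
lemma card_ballot_words:
  assumes "b \<le> a + h + 1"
  shows "card (ballot_words h a b) + ((a + b) choose (a + h + 1)) = (a + b) choose a"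
  using assms
proof (induct "a + b" arbitrary: h a b)
  case 0
  then show ?case by (simp add: ballot_words_0_0)
next
  case (Suc m)
  note split = card_ballot_words_first_step[of a b h]
  show ?case
  proof (cases a)
    case 0
    then have b: "b = Suc m" and "m \<le> h"
      using Suc.hyps(2) Suc.prems by auto
    show ?thesis
    proof (cases h)
      case 0
      then show ?thesis using split b \<open>a = 0\<close> \<open>m \<le> h\<close> by simp
    next
      case (Suc h')
      have "card (ballot_words h' 0 m) + (m choose Suc h') = 1"
        using Suc.hyps(1)[of 0 m h'] \<open>m \<le> h\<close> Suc by simp
      moreover have "card (ballot_words h a b) = card (ballot_words h' 0 m)"
        using split b \<open>a = 0\<close> Suc by simp
      moreover have "(a + b) choose (a + h + 1) = m choose Suc h'"
        using b \<open>a = 0\<close> \<open>m \<le> h\<close> Suc by (cases "m = Suc h'") simp_all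
      moreover have "(a + b) choose a = 1"
        using \<open>a = 0\<close> by simp
      ultimately show ?thesis
        by linarith
    qed
  next
    case (Suc a')
    have ih_N: "card (ballot_words (Suc h) a' b) + (m choose Suc (a + h)) = m choose a'"
      using Suc.hyps(1)[of a' b "Suc h"] Suc.hyps(2) Suc.prems \<open>a = Suc a'\<close> by simp
    have "a + b = Suc m"
      using Suc.hyps(2) by simp
    then have pascal: "(a + b) choose (a + h + 1) = (m choose (a + h)) + (m choose Suc (a + h))"
      "(a + b) choose a = (m choose a') + (m choose a)"
      using \<open>a = Suc a'\<close> by simp_all
    show ?thesis
    proof (cases "0 < h \<and> 0 < b")
      case True
      then obtain b' where b': "b = Suc b'"
        by (cases b) auto
      have "card (ballot_words (h - 1) a b') + (m choose (a + h)) = m choose a"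
        using Suc.hyps(1)[of a b' "h - 1"] Suc.hyps(2) Suc.prems True b' by simp
      moreover have "card (ballot_words h a b) =
          card (ballot_words (Suc h) a' b) + card (ballot_words (h - 1) a b')"
        using split \<open>a = Suc a'\<close> True b' by simp
      ultimately show ?thesis
        using ih_N pascal by linarith
    next
      case False
      have "m choose (a + h) = m choose a"
        using \<open>a + b = Suc m\<close> \<open>a = Suc a'\<close> False
        by (cases "h = 0") (simp_all add: binomial_eq_0)
      moreover have "card (ballot_words h a b) = card (ballot_words (Suc h) a' b)"
        using split \<open>a = Suc a'\<close> False by auto
      ultimately show ?thesis
        using ih_N pascal by linarith
    qed
  qed
qed

lemma card_dyck_paths:
  assumes "n \<ge> 1"
  shows "real (card {w. dyck_path n w}) = real ((2 * n) choose n) / real (n + 1)"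
proof -
  have dyck: "{w. dyck_path n w} = ballot_words 0 n n"
    unfolding ballot_words_def by (auto simp: dyck_path_iff_stays_nonneg)
  have reflection: "card (ballot_words 0 n n) + ((2 * n) choose (n + 1)) = (2 * n) choose n"
    using card_ballot_words[of n n 0] by (simp add: mult_2)
  have absorption: "(n + 1) * ((2 * n) choose (n + 1)) = n * ((2 * n) choose n)"
  proof -
    obtain k where "n = Suc k"
      using assms by (cases n) auto
    then show ?thesis
      using Suc_times_binomial_add[of n k] by (simp add: mult_2)
  qed
  have "(n + 1) * card (ballot_words 0 n n) + n * ((2 * n) choose n) = (n + 1) * ((2 * n) choose n)"
    using arg_cong[OF reflection, of "(*) (n + 1)"] absorption by (simp only: add_mult_distrib2)
  then have "(n + 1) * card {w. dyck_path n w} = (2 * n) choose n"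
    unfolding dyck by simp
  then show ?thesis
    by (simp add: field_simps flip: of_nat_mult)
qed

section \<open>Corners of lattice paths\<close>

fun corner_word :: "nat \<times> nat \<Rightarrow> (nat \<times> nat) list \<Rightarrow> step list" where
  "corner_word p [] = []"
| "corner_word p (v # vs) =
     replicate (fst v - fst p) N @ replicate (snd v - snd p) E @ corner_word v vs"

fun weak_chain :: "nat \<times> nat \<Rightarrow> (nat \<times> nat) list \<Rightarrow> bool" where
  "weak_chain p [] = True"
| "weak_chain p (v # vs) = (fst p \<le> fst v \<and> snd p \<le> snd v \<and> weak_chain v vs)"

fun strict_chain :: "nat \<times> nat \<Rightarrow> (nat \<times> nat) list \<Rightarrow> bool" where
  "strict_chain p [] = True"
| "strict_chain p (v # vs) = (fst p < fst v \<and> snd p < snd v \<and> strict_chain v vs)"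

text \<open>The corners of a word starting with N: only its last block may have no E step.\<close>
fun corner_chain :: "nat \<times> nat \<Rightarrow> (nat \<times> nat) list \<Rightarrow> bool" where
  "corner_chain p [] = True"
| "corner_chain p (v # vs) =
     (fst p < fst v \<and> snd p \<le> snd v \<and> (vs \<noteq> [] \<longrightarrow> snd p < snd v) \<and> corner_chain v vs)"

lemma strict_chain_imp_weak_chain: "strict_chain p vs \<Longrightarrow> weak_chain p vs"
  by (induct vs arbitrary: p) auto

lemma strict_chain_snoc:
  "strict_chain p (vs @ [u]) \<longleftrightarrow>
     strict_chain p vs \<and> fst (last (p # vs)) < fst u \<and> snd (last (p # vs)) < snd u"
  by (induct vs arbitrary: p) auto

lemma strict_chain_mem: "strict_chain p vs \<Longrightarrow> v \<in> set vs \<Longrightarrow> fst p < fst v \<and> snd p < snd v"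
  by (induct vs arbitrary: p) fastforce+

lemma strict_chain_map_rev_upt:
  "strict_chain p (map f (rev [1..<Suc l])) \<longleftrightarrow>
     (0 < l \<longrightarrow> fst p < fst (f l) \<and> snd p < snd (f l)) \<and>
     (\<forall>i. 1 \<le> i \<longrightarrow> i < l \<longrightarrow> fst (f (Suc i)) < fst (f i) \<and> snd (f (Suc i)) < snd (f i))"
proof (induct l arbitrary: p)
  case (Suc l)
  have "rev [1..<Suc (Suc l)] = Suc l # rev [1..<Suc l]"
    by simp
  then have "strict_chain p (map f (rev [1..<Suc (Suc l)])) \<longleftrightarrow>
      (fst p < fst (f (Suc l)) \<and> snd p < snd (f (Suc l))) \<and>
      (0 < l \<longrightarrow> fst (f (Suc l)) < fst (f l) \<and> snd (f (Suc l)) < snd (f l)) \<and>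
      (\<forall>i. 1 \<le> i \<longrightarrow> i < l \<longrightarrow> fst (f (Suc i)) < fst (f i) \<and> snd (f (Suc i)) < snd (f i))"
    using Suc[of "f (Suc l)"] by (simp del: upt_Suc)
  also have "\<dots> \<longleftrightarrow> (fst p < fst (f (Suc l)) \<and> snd p < snd (f (Suc l))) \<and>
      (\<forall>i. 1 \<le> i \<longrightarrow> i < Suc l \<longrightarrow> fst (f (Suc i)) < fst (f i) \<and> snd (f (Suc i)) < snd (f i))"
    by (auto simp: less_Suc_eq) (metis Suc_leI)+
  finally show ?case
    by simp
qed simp

lemma corner_chain_snoc_imp:
  "corner_chain p (vs @ [u]) \<Longrightarrow> strict_chain p vs \<and> fst (last (p # vs)) < fst u"
  by (induct vs arbitrary: p) auto

lemma weak_chain_le_last: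
  "weak_chain p vs \<Longrightarrow> v \<in> set (p # vs) \<Longrightarrow>
     fst v \<le> fst (last (p # vs)) \<and> snd v \<le> snd (last (p # vs))"
proof (induct vs arbitrary: p v)
  case (Cons u vs)
  have chain: "weak_chain u vs" and pu: "fst p \<le> fst u \<and> snd p \<le> snd u"
    using Cons.prems(1) by simp_all
  have last: "last (p # u # vs) = last (u # vs)"
    by simp
  show ?case
  proof (cases "v = p")
    case True
    have "fst u \<le> fst (last (u # vs)) \<and> snd u \<le> snd (last (u # vs))"
      using Cons.hyps[OF chain, of u] by simp
    then show ?thesis
      unfolding last True using pu by linarith
  next
    case False
    then show ?thesis
      unfolding last using Cons.hyps[OF chain, of v] Cons.prems(2) by simp
  qed
qed simp

lemma count_corner_word:
  assumes "weak_chain p vs"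
  shows "count_step N (corner_word p vs) = fst (last (p # vs)) - fst p"
    and "count_step E (corner_word p vs) = snd (last (p # vs)) - snd p"
  using assms by (induct vs arbitrary: p) (force dest: weak_chain_le_last)+

lemma stays_nonneg_corner_word:
  assumes "weak_chain p vs" and "snd p \<le> fst p"
  shows "stays_nonneg (fst p - snd p) (corner_word p vs) \<longleftrightarrow> (\<forall>v\<in>set vs. snd v \<le> fst v)"
  using assms
proof (induct vs arbitrary: p)
  case (Cons v vs)
  then have "stays_nonneg (fst p - snd p) (corner_word p (v # vs)) \<longleftrightarrow>
      snd v \<le> fst v \<and> stays_nonneg (fst v - snd v) (corner_word v vs)"
    by (auto simp: stays_nonneg_replicate_N_append stays_nonneg_replicate_E_append)
  moreover have "snd v \<le> fst v \<Longrightarrow>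
      stays_nonneg (fst v - snd v) (corner_word v vs) \<longleftrightarrow> (\<forall>u\<in>set vs. snd u \<le> fst u)"
    using Cons.hyps[of v] Cons.prems by simp
  ultimately show ?case
    by auto
qed simp

definition first_block :: "step list \<Rightarrow> nat \<times> nat \<times> step list" where
  "first_block w =
     (length (takeWhile (\<lambda>x. x = N) w),
      length (takeWhile (\<lambda>x. x = E) (dropWhile (\<lambda>x. x = N) w)),
      dropWhile (\<lambda>x. x = E) (dropWhile (\<lambda>x. x = N) w))"

lemma length_rest_first_block:
  assumes "first_block (s # w) = (k, m, r)"
  shows "length r < Suc (length w)"
  using assms length_dropWhile_le[of _ w]
  by (cases s) (auto simp: first_block_def intro: le_less_trans[OF length_dropWhile_le])

function corners :: "nat \<times> nat \<Rightarrow> step list \<Rightarrow> (nat \<times> nat) list" where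
  "corners p [] = []"
| "corners p (s # w) =
     (let (k, m, r) = first_block (s # w); q = (fst p + k, snd p + m) in q # corners q r)"
  by pat_completeness auto
termination
  by (relation "measure (\<lambda>(p, w). length w)") (auto intro: length_rest_first_block[OF sym])

lemma corners_eq_first_block:
  assumes "first_block w = (k, m, r)" and "w \<noteq> []"
  shows "corners p w = (fst p + k, snd p + m) # corners (fst p + k, snd p + m) r"
  using assms by (cases w) (auto simp: Let_def)

lemma replicate_first_block:
  assumes "first_block w = (k, m, r)"
  shows "replicate k N @ replicate m E @ r = w"
proof -
  have "replicate (length (takeWhile (\<lambda>x. x = c) u)) c = takeWhile (\<lambda>x. x = c) u" for c :: step and u
    by (rule replicate_length_same) (auto dest: set_takeWhileD)
  then show ?thesis
    using assms unfolding first_block_def by (metis Pair_inject takeWhile_dropWhile_id)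
qed

lemma first_block_shape:
  assumes "first_block w = (k, m, r)"
  shows "r = [] \<or> hd r = N" and "r \<noteq> [] \<Longrightarrow> 0 < m" and "w \<noteq> [] \<Longrightarrow> hd w = N \<Longrightarrow> 0 < k"
proof -
  let ?u = "dropWhile (\<lambda>x. x = N) w"
  have r: "r = dropWhile (\<lambda>x. x = E) ?u" and m: "m = length (takeWhile (\<lambda>x. x = E) ?u)"
    and k: "k = length (takeWhile (\<lambda>x. x = N) w)"
    using assms by (auto simp: first_block_def)
  show "r = [] \<or> hd r = N"
    using hd_dropWhile[of "\<lambda>x. x = E" ?u] step.exhaust unfolding r by blast
  show "0 < m" if "r \<noteq> []"
  proof -
    have "?u \<noteq> [] \<and> hd ?u \<noteq> N"
      using that hd_dropWhile[of "\<lambda>x. x = N" w] unfolding r by fastforce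
    then show ?thesis
      unfolding m using step.exhaust by (cases ?u) auto
  qed
  show "0 < k" if "w \<noteq> []" and "hd w = N"
    using that unfolding k by (cases w) auto
qed

lemma first_block_replicate:
  assumes "0 < m" and "r = [] \<or> hd r = N"
  shows "first_block (replicate k N @ replicate m E @ r) = (k, m, r)"
proof -
  have "takeWhile (\<lambda>x. x = E) r = [] \<and> dropWhile (\<lambda>x. x = E) r = r"
    using assms(2) by (cases r) auto
  then have "takeWhile (\<lambda>x. x = E) (replicate m E @ r) = replicate m E"
    and "dropWhile (\<lambda>x. x = E) (replicate m E @ r) = r"
    by (induct m) auto
  moreover have "takeWhile (\<lambda>x. x = N) (replicate k N @ replicate m E @ r) = replicate k N"
    and "dropWhile (\<lambda>x. x = N) (replicate k N @ replicate m E @ r) = replicate m E @ r"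
    using assms(1) by (induct k) (auto simp: gr0_conv_Suc)
  ultimately show ?thesis
    by (simp add: first_block_def)
qed

lemma corner_word_corners: "corner_word p (corners p w) = w"
proof (induct p w rule: corners.induct)
  case (2 p s w)
  obtain k m r where block: "first_block (s # w) = (k, m, r)"
    by (metis prod_cases3)
  show ?case
    using corners_eq_first_block[OF block] replicate_first_block[OF block] 2[OF block[symmetric] refl refl refl]
    by simp
qed simp

lemma weak_chain_corners: "weak_chain p (corners p w)"
proof (induct p w rule: corners.induct)
  case (2 p s w)
  obtain k m r where block: "first_block (s # w) = (k, m, r)"
    by (metis prod_cases3)
  show ?case
    using corners_eq_first_block[OF block] 2[OF block[symmetric] refl refl refl] by simp
qed simp

lemma corner_chain_corners: "w = [] \<or> hd w = N \<Longrightarrow> corner_chain p (corners p w)"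
proof (induct p w rule: corners.induct)
  case (2 p s w)
  obtain k m r where block: "first_block (s # w) = (k, m, r)"
    by (metis prod_cases3)
  show ?case
    using corners_eq_first_block[OF block] 2(1)[OF block[symmetric] refl refl refl] 2(2)
      first_block_shape[OF block]
    by (cases r) auto
qed simp

lemma corners_corner_word: "strict_chain p vs \<Longrightarrow> corners p (corner_word p vs) = vs"
proof (induct vs arbitrary: p)
  case (Cons v vs)
  have "corner_word v vs = [] \<or> hd (corner_word v vs) = N"
    using Cons.prems by (cases vs) auto
  then have "first_block (corner_word p (v # vs)) = (fst v - fst p, snd v - snd p, corner_word v vs)"
    using Cons.prems by (simp add: first_block_replicate)
  moreover have "corner_word p (v # vs) \<noteq> []"
    using Cons.prems by simp
  ultimately show ?case
    using Cons corners_eq_first_block by (simp add: less_imp_le)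
qed simp

definition corner_lists :: "nat \<Rightarrow> (nat \<times> nat) list set" where
  "corner_lists n = {vs. strict_chain (0, 0) vs \<and> (\<forall>v\<in>set vs. snd v \<le> fst v \<and> fst v < n)}"

definition corner_path :: "nat \<Rightarrow> (nat \<times> nat) list \<Rightarrow> step list" where
  "corner_path n vs = corner_word (0, 0) (vs @ [(n, n)])"

lemma strict_chain_snoc_diagonal:
  assumes "vs \<in> corner_lists n" and "n \<ge> 1"
  shows "strict_chain (0, 0) (vs @ [(n, n)])"
proof -
  have "fst (last ((0, 0) # vs)) < n \<and> snd (last ((0, 0) # vs)) < n"
  proof (cases "vs = []")
    case False
    then have "last vs \<in> set vs"
      by simp
    with assms(1) False show ?thesis
      unfolding corner_lists_def by fastforce
  qed (use assms(2) in simp)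
  with assms(1) show ?thesis
    by (simp add: strict_chain_snoc corner_lists_def)
qed

lemma corner_path_dyck_path:
  assumes "vs \<in> corner_lists n" and "n \<ge> 1"
  shows "dyck_path n (corner_path n vs)"
proof -
  have chain: "weak_chain (0, 0) (vs @ [(n, n)])"
    using strict_chain_imp_weak_chain strict_chain_snoc_diagonal[OF assms] .
  have "stays_nonneg 0 (corner_path n vs)"
    using stays_nonneg_corner_word[OF chain] assms(1)
    by (auto simp: corner_path_def corner_lists_def)
  moreover have "count_step N (corner_path n vs) = n" and "count_step E (corner_path n vs) = n"
    using count_corner_word[OF chain] by (simp_all add: corner_path_def)
  ultimately show ?thesis
    by (simp add: dyck_path_iff_stays_nonneg)
qed

lemma dyck_path_eq_corner_path:
  assumes "dyck_path n w" and "n \<ge> 1"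
  obtains vs where "vs \<in> corner_lists n" and "corner_path n vs = w"
proof -
  have count_N: "count_step N w = n" and count_E: "count_step E w = n" and nonneg: "stays_nonneg 0 w"
    using assms(1) by (simp_all add: dyck_path_iff_stays_nonneg)
  have "w \<noteq> []"
    using count_N assms(2) by auto
  then obtain x u where "w = x # u"
    by (cases w) auto
  with nonneg have "hd w = N"
    by (cases x) auto
  define ps where "ps = corners (0, 0) w"
  have corner: "corner_chain (0, 0) ps" and weak: "weak_chain (0, 0) ps"
    and word: "corner_word (0, 0) ps = w"
    using \<open>hd w = N\<close> by (simp_all add: ps_def corner_chain_corners weak_chain_corners corner_word_corners)
  have "ps \<noteq> []"
    using word \<open>w \<noteq> []\<close> by auto
  moreover have "last ((0, 0) # ps) = (n, n)"
    using count_corner_word[OF weak] word count_N count_E by (simp add: prod_eq_iff)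
  ultimately have ps: "ps = butlast ps @ [(n, n)]"
    by (metis append_butlast_last_id last_ConsR)
  define vs where "vs = butlast ps"
  have strict: "strict_chain (0, 0) vs" and below: "fst (last ((0, 0) # vs)) < n"
    using corner_chain_snoc_imp[of "(0, 0)" vs "(n, n)"] corner ps by (simp_all add: vs_def)
  have "\<forall>v\<in>set ps. snd v \<le> fst v"
    using stays_nonneg_corner_word[OF weak] word nonneg by simp
  moreover have "fst v < n" if "v \<in> set vs" for v
    using weak_chain_le_last[OF strict_chain_imp_weak_chain[OF strict], of v] below that by simp
  ultimately have "vs \<in> corner_lists n"
    using strict ps by (auto simp: corner_lists_def vs_def dest: in_set_butlastD)
  moreover have "corner_path n vs = w"
    using ps word by (simp add: corner_path_def vs_def)
  ultimately show ?thesis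
    using that by blast
qed

lemma bij_betw_corner_path:
  assumes "n \<ge> 1"
  shows "bij_betw (corner_path n) (corner_lists n) {w. dyck_path n w}"
proof (rule bij_betw_imageI)
  show "inj_on (corner_path n) (corner_lists n)"
  proof (rule inj_onI)
    fix vs us
    assume "vs \<in> corner_lists n" "us \<in> corner_lists n" "corner_path n vs = corner_path n us"
    then have "vs @ [(n, n)] = us @ [(n, n)]"
      using corners_corner_word strict_chain_snoc_diagonal assms unfolding corner_path_def by metis
    then show "vs = us"
      by simp
  qed
  show "corner_path n ` corner_lists n = {w. dyck_path n w}"
    using corner_path_dyck_path dyck_path_eq_corner_path assms by blast
qed

section \<open>Partitions and Frobenius coordinates\<close>

lemma le_card_iff_mem_downclosed:
  assumes "T \<subseteq> {1..L}" and "\<And>x y. x \<in> T \<Longrightarrow> 1 \<le> y \<Longrightarrow> y \<le> x \<Longrightarrow> y \<in> T" and "1 \<le> j"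
  shows "j \<le> card T \<longleftrightarrow> j \<in> T"
proof
  assume "j \<in> T"
  then have "{1..j} \<subseteq> T"
    using assms(2) by (simp add: subset_iff)
  moreover have "finite T"
    using assms(1) by (rule finite_subset) simp
  ultimately show "j \<le> card T"
    using card_mono[of T "{1..j}"] by simp
next
  assume "j \<le> card T"
  show "j \<in> T"
  proof (rule ccontr)
    assume "j \<notin> T"
    then have "T \<subseteq> {1..<j}"
      using assms by (fastforce simp: not_le[symmetric])
    then have "card T < j"
      using assms(3) card_mono[of "{1..<j}" T] by simp
    with \<open>j \<le> card T\<close> show False
      by simp
  qed
qed

lemma part_nth: "1 \<le> i \<Longrightarrow> i \<le> length lam \<Longrightarrow> part lam i = lam ! (i - 1)"
  by (simp add: part_def)

lemma part_beyond_length: "length lam < i \<Longrightarrow> part lam i = 0"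
  by (simp add: part_def)

lemma part_antimono:
  assumes "is_partition lam" and "1 \<le> i" and "i \<le> j"
  shows "part lam j \<le> part lam i"
proof (cases "j \<le> length lam \<and> i < j")
  case True
  then have "lam ! (j - 1) \<le> lam ! (i - 1)"
    using assms unfolding is_partition_def sorted_wrt_iff_nth_less by auto
  with True assms show ?thesis
    by (simp add: part_nth)
qed (use assms in \<open>auto simp: part_beyond_length\<close>)

lemma le_part_iff_le_conjpart:
  assumes "is_partition lam" and "1 \<le> i" and "i \<le> length lam"
  shows "j \<le> part lam i \<longleftrightarrow> i \<le> conjpart lam j"
proof -
  let ?T = "{k. 1 \<le> k \<and> k \<le> length lam \<and> j \<le> part lam k}"
  have "i \<le> card ?T \<longleftrightarrow> i \<in> ?T"
  proof (rule le_card_iff_mem_downclosed[of _ "length lam"])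
    fix x y
    assume "x \<in> ?T" and "1 \<le> y" and "y \<le> x"
    then show "y \<in> ?T"
      using part_antimono[OF assms(1), of y x] by auto
  qed (use assms(2) in auto)
  with assms show ?thesis
    unfolding conjpart_def by auto
qed

lemma conjpart_le_length: "conjpart lam j \<le> length lam"
proof -
  have "conjpart lam j \<le> card {1..length lam}"
    unfolding conjpart_def by (rule card_mono) auto
  then show ?thesis
    by simp
qed

lemma conjpart_antimono: "j \<le> j' \<Longrightarrow> conjpart lam j' \<le> conjpart lam j"
  unfolding conjpart_def by (rule card_mono) auto

lemma durfee_le_length: "durfee lam \<le> length lam"
  unfolding durfee_def by (rule Max.boundedI) auto

lemma le_durfee_iff:
  assumes "is_partition lam" and "1 \<le> i"
  shows "i \<le> durfee lam \<longleftrightarrow> i \<le> part lam i"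
proof
  assume "i \<le> part lam i"
  moreover from this have "i \<le> length lam"
    using assms(2) by (cases "i \<le> length lam") (auto simp: part_beyond_length)
  ultimately show "i \<le> durfee lam"
    unfolding durfee_def using assms(2) by (intro Max_ge_iff[THEN iffD2]) auto
next
  assume "i \<le> durfee lam"
  have "durfee lam \<in> {0} \<union> {i. 1 \<le> i \<and> i \<le> length lam \<and> i \<le> part lam i}"
    unfolding durfee_def by (rule Max_in) auto
  with \<open>i \<le> durfee lam\<close> assms show "i \<le> part lam i"
    using part_antimono[OF assms] by fastforce
qed

lemma le_durfee_iff_le_conjpart:
  assumes "is_partition lam" and "1 \<le> i"
  shows "i \<le> durfee lam \<longleftrightarrow> i \<le> conjpart lam i"
proof (cases "i \<le> length lam")
  case True
  then show ?thesis
    using le_durfee_iff[OF assms] le_part_iff_le_conjpart[OF assms True] by simp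
next
  case False
  then show ?thesis
    using conjpart_le_length[of lam i] durfee_le_length[of lam] by simp
qed

lemma frob_strict_antimono:
  assumes "is_partition lam" and "1 \<le> i" and "i < j" and "j \<le> durfee lam"
  shows "frob_a lam j < frob_a lam i" and "frob_b lam j < frob_b lam i"
proof -
  have "1 \<le> j"
    using assms by simp
  have "j \<le> part lam j" and "j \<le> conjpart lam j"
    using assms(4) le_durfee_iff[OF assms(1) \<open>1 \<le> j\<close>]
      le_durfee_iff_le_conjpart[OF assms(1) \<open>1 \<le> j\<close>] by simp_all
  moreover have "part lam j \<le> part lam i" and "conjpart lam j \<le> conjpart lam i"
    using assms part_antimono conjpart_antimono by simp_all
  ultimately show "frob_a lam j < frob_a lam i" and "frob_b lam j < frob_b lam i"
    using assms(3) unfolding frob_a_def frob_b_def by linarith+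
qed

lemma part_eq_card_conjpart:
  assumes "is_partition lam" and "durfee lam < i"
  shows "part lam i = card {j. 1 \<le> j \<and> j \<le> durfee lam \<and> i \<le> conjpart lam j}"
proof (cases "i \<le> length lam")
  case True
  have "part lam i \<le> durfee lam"
  proof (rule ccontr)
    assume "\<not> part lam i \<le> durfee lam"
    then have "Suc (durfee lam) \<le> part lam (Suc (durfee lam))"
      using part_antimono[OF assms(1), of "Suc (durfee lam)" i] assms(2) by simp
    then show False
      using le_durfee_iff[OF assms(1), of "Suc (durfee lam)"] by simp
  qed
  have "i \<le> conjpart lam j \<longleftrightarrow> j \<le> part lam i" for j
    using le_part_iff_le_conjpart[OF assms(1) _ True] assms(2) by simp
  then have "{j. 1 \<le> j \<and> j \<le> durfee lam \<and> i \<le> conjpart lam j} =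
      {j. 1 \<le> j \<and> j \<le> durfee lam \<and> j \<le> part lam i}"
    by simp
  also have "\<dots> = {1..part lam i}"
    using \<open>part lam i \<le> durfee lam\<close> by auto
  finally show ?thesis
    by simp
next
  case False
  then have "\<not> i \<le> conjpart lam j" for j
    using conjpart_le_length[of lam j] by simp
  then have "{j. 1 \<le> j \<and> j \<le> durfee lam \<and> i \<le> conjpart lam j} = {}"
    by simp
  with False show ?thesis
    by (simp add: part_beyond_length)
qed

lemma partition_eqI_frobenius:
  assumes "is_partition lam" and "is_partition mu" and "length lam = length mu"
    and "durfee lam = durfee mu"
    and "\<And>i. 1 \<le> i \<Longrightarrow> i \<le> durfee lam \<Longrightarrow> frob_a lam i = frob_a mu i \<and> frob_b lam i = frob_b mu i"
  shows "lam = mu"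
proof -
  have square: "part lam i = part mu i \<and> conjpart lam i = conjpart mu i"
    if "1 \<le> i" and "i \<le> durfee lam" for i
  proof -
    have "i \<le> part lam i" "i \<le> conjpart lam i" "i \<le> part mu i" "i \<le> conjpart mu i"
      using that assms(4) le_durfee_iff[OF assms(1)] le_durfee_iff_le_conjpart[OF assms(1)]
        le_durfee_iff[OF assms(2)] le_durfee_iff_le_conjpart[OF assms(2)] by auto
    with assms(5)[OF that] show ?thesis
      unfolding frob_a_def frob_b_def by auto
  qed
  have parts: "part lam i = part mu i" if "1 \<le> i" for i
  proof (cases "i \<le> durfee lam")
    case True
    then show ?thesis
      using square that by simp
  next
    case False
    have "{j. 1 \<le> j \<and> j \<le> durfee lam \<and> i \<le> conjpart lam j} =
        {j. 1 \<le> j \<and> j \<le> durfee mu \<and> i \<le> conjpart mu j}"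
      using square assms(4) by auto
    with False show ?thesis
      using part_eq_card_conjpart[OF assms(1)] part_eq_card_conjpart[OF assms(2)] assms(4) by simp
  qed
  show ?thesis
  proof (rule nth_equalityI[OF assms(3)])
    fix k
    assume "k < length lam"
    then show "lam ! k = mu ! k"
      using parts[of "Suc k"] assms(3) by (simp add: part_nth)
  qed
qed

lemma strict_antimono_gap:
  fixes f :: "nat \<Rightarrow> nat"
  assumes "\<And>k. lo \<le> k \<Longrightarrow> k < hi \<Longrightarrow> f (Suc k) < f k"
    and "lo \<le> i" and "i \<le> j" and "j \<le> hi"
  shows "f j + (j - i) \<le> f i"
  using assms(3,4)
proof (induct j)
  case (Suc j)
  then show ?case
    using assms(1)[of j] assms(2) by (cases "i = Suc j") (auto simp: Suc_diff_le)
qed simp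

text \<open>The rows below the Durfee square are read off from the columns col j = b j + j, which are
  the parts of the conjugate partition.\<close>
locale frobenius_coordinates =
  fixes n l :: nat and a b :: "nat \<Rightarrow> nat"
  assumes strict_antimono: "\<And>i. 1 \<le> i \<Longrightarrow> i < l \<Longrightarrow> a (Suc i) < a i \<and> b (Suc i) < b i"
    and leg_bound: "0 < l \<Longrightarrow> b 1 < n"
begin

definition col :: "nat \<Rightarrow> nat" where
  "col j = b j + j"

definition row :: "nat \<Rightarrow> nat" where
  "row k = (if k \<le> l then a k + k else card {i. 1 \<le> i \<and> i \<le> l \<and> k \<le> col i})"

definition lambda :: "nat list" where
  "lambda = map row [1..<n + 1]"

lemma arm_gap: "1 \<le> i \<Longrightarrow> i \<le> j \<Longrightarrow> j \<le> l \<Longrightarrow> a j + (j - i) \<le> a i"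
  by (rule strict_antimono_gap[of 1 l a]) (use strict_antimono in auto)

lemma leg_gap: "1 \<le> i \<Longrightarrow> i \<le> j \<Longrightarrow> j \<le> l \<Longrightarrow> b j + (j - i) \<le> b i"
  by (rule strict_antimono_gap[of 1 l b]) (use strict_antimono in auto)

lemma col_antimono: "1 \<le> j \<Longrightarrow> j \<le> j' \<Longrightarrow> j' \<le> l \<Longrightarrow> col j' \<le> col j"
  using leg_gap unfolding col_def by fastforce

lemma col_bounds:
  assumes "1 \<le> j" and "j \<le> l"
  shows "l \<le> col j" and "col j \<le> n"
  using col_antimono[of j l] col_antimono[of 1 j] leg_bound assms unfolding col_def by auto

lemma l_le_n: "l \<le> n"
  using col_bounds[of 1] by (cases "l = 0") auto

lemma card_col_le: "card {i. 1 \<le> i \<and> i \<le> l \<and> k \<le> col i} \<le> l"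
proof -
  have "card {i. 1 \<le> i \<and> i \<le> l \<and> k \<le> col i} \<le> card {1..l}"
    by (rule card_mono) auto
  then show ?thesis
    by simp
qed

lemma row_antimono:
  assumes "1 \<le> k"
  shows "row (Suc k) \<le> row k"
proof (cases "Suc k \<le> l")
  case True
  then show ?thesis
    using strict_antimono[of k] assms by (simp add: row_def)
next
  case False
  have "card {i. 1 \<le> i \<and> i \<le> l \<and> Suc k \<le> col i} \<le> card {i. 1 \<le> i \<and> i \<le> l \<and> k \<le> col i}"
    by (rule card_mono[OF finite_subset[of _ "{1..l}"]]) auto
  with False show ?thesis
    using card_col_le[of "Suc k"] by (auto simp: row_def)
qed

lemma length_lambda: "length lambda = n"
  by (simp add: lambda_def)

lemma part_lambda: "1 \<le> k \<Longrightarrow> k \<le> n \<Longrightarrow> part lambda k = row k"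
  by (simp add: part_def lambda_def nth_map_upt del: upt_Suc)

lemma is_partition_lambda: "is_partition lambda"
  unfolding is_partition_def sorted_wrt_iff_nth_Suc_transp[OF transp_on_ge]
  by (simp add: lambda_def nth_map_upt row_antimono del: upt_Suc)

lemma durfee_lambda: "durfee lambda = l"
proof -
  have "l \<le> durfee lambda"
    using le_durfee_iff[OF is_partition_lambda, of l] part_lambda[of l] l_le_n
    by (cases "l = 0") (simp_all add: row_def)
  moreover have "\<not> Suc l \<le> part lambda (Suc l)"
    using part_lambda[of "Suc l"] card_col_le[of "Suc l"]
    by (cases "Suc l \<le> n") (simp_all add: row_def part_beyond_length length_lambda)
  ultimately show ?thesis
    using le_durfee_iff[OF is_partition_lambda, of "Suc l"] by simp
qed

lemma conjpart_lambda:
  assumes "1 \<le> j" and "j \<le> l"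
  shows "conjpart lambda j = col j"
proof -
  have "j \<le> row k \<longleftrightarrow> k \<le> col j" if "1 \<le> k" for k
  proof (cases "k \<le> l")
    case True
    have "j \<le> a k + k"
      using arm_gap[of k j] that assms by (cases "k < j") auto
    then show ?thesis
      using True col_bounds[OF assms] by (simp add: row_def)
  next
    case False
    have "j \<le> card {i. 1 \<le> i \<and> i \<le> l \<and> k \<le> col i} \<longleftrightarrow> k \<le> col j"
    proof (subst le_card_iff_mem_downclosed[of _ l])
      fix x y
      assume "x \<in> {i. 1 \<le> i \<and> i \<le> l \<and> k \<le> col i}" and "1 \<le> y" and "y \<le> x"
      then show "y \<in> {i. 1 \<le> i \<and> i \<le> l \<and> k \<le> col i}"
        using col_antimono[of y x] by auto
    qed (use assms in auto)
    with False show ?thesis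
      by (simp add: row_def)
  qed
  then have "{k. 1 \<le> k \<and> k \<le> length lambda \<and> j \<le> part lambda k} = {1..col j}"
    using col_bounds[OF assms] by (auto simp: length_lambda part_lambda)
  then show ?thesis
    by (simp add: conjpart_def)
qed

lemma frob_lambda:
  assumes "1 \<le> i" and "i \<le> l"
  shows "frob_a lambda i = a i" and "frob_b lambda i = b i"
  using assms l_le_n conjpart_lambda[OF assms]
  by (simp_all add: frob_a_def frob_b_def part_lambda row_def col_def)

end

lemma partition_with_frobenius_coordinates:
  fixes a b :: "nat \<Rightarrow> nat"
  assumes "\<And>i. 1 \<le> i \<Longrightarrow> i < l \<Longrightarrow> a (Suc i) < a i \<and> b (Suc i) < b i"
    and "0 < l \<Longrightarrow> b 1 < n"
  shows "\<exists>lam. is_partition lam \<and> length lam = n \<and> durfee lam = l \<and>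
    (\<forall>i. 1 \<le> i \<and> i \<le> l \<longrightarrow> frob_a lam i = a i \<and> frob_b lam i = b i)"
proof -
  interpret frobenius_coordinates n l a b
    using assms by unfold_locales
  show ?thesis
    using is_partition_lambda length_lambda durfee_lambda frob_lambda by blast
qed

section \<open>Modified balanced partitions as corner chains\<close>

text \<open>The bound on the largest part in the definition is implied by the other conditions.\<close>
lemma modified_balanced_iff_frobenius:
  "modified_balanced n lam \<longleftrightarrow> is_partition lam \<and> length lam = n \<and>
     (\<forall>i. 1 \<le> i \<and> i \<le> durfee lam \<longrightarrow> frob_a lam i < frob_b lam i)"
proof (cases "is_partition lam \<and> length lam = n")
  case True
  then have len: "length lam = n"
    by simp
  from True have square: "1 \<le> i \<Longrightarrow> i \<le> n \<and> i \<le> part lam i \<longleftrightarrow> i \<le> durfee lam" for i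
    using le_durfee_iff[of lam i] durfee_le_length[of lam] by auto
  have balanced: "part lam i < conjpart lam i \<longleftrightarrow> frob_a lam i < frob_b lam i"
    if "1 \<le> i" and "i \<le> durfee lam" for i
    using that le_durfee_iff[of lam i] le_durfee_iff_le_conjpart[of lam i] True
    unfolding frob_a_def frob_b_def by auto
  have "part lam 1 \<le> n - 1" if "\<forall>i. 1 \<le> i \<and> i \<le> durfee lam \<longrightarrow> frob_a lam i < frob_b lam i"
  proof (cases "durfee lam = 0")
    case True
    then show ?thesis
      using square[of 1] part_beyond_length[of lam 1] len by (cases n) auto
  next
    case False
    then have "part lam 1 < conjpart lam 1"
      using that balanced[of 1] by simp
    then show ?thesis
      using conjpart_le_length[of lam 1] len by simp
  qed
  with True show ?thesis
    unfolding modified_balanced_def using square balanced by blast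
qed (auto simp: modified_balanced_def)

definition frobenius_corners :: "nat list \<Rightarrow> (nat \<times> nat) list" where
  "frobenius_corners lam = map (\<lambda>i. (frob_b lam i, frob_a lam i + 1)) (rev [1..<Suc (durfee lam)])"

lemma corner_word_map_rev_upt:
  "corner_word (f (Suc m)) (map f (rev [1..<Suc m]) @ vs) =
     concat (map (\<lambda>i. replicate (fst (f i) - fst (f (i + 1))) N @
                      replicate (snd (f i) - snd (f (i + 1))) E) (rev [1..<Suc m]))
     @ corner_word (f 1) vs"
  by (induct m) simp_all

lemma mbp_word_eq_corner_path: "mbp_word n lam = corner_path n (frobenius_corners lam)"
proof (cases "durfee lam")
  case 0
  then show ?thesis
    by (simp add: mbp_word_def corner_path_def frobenius_corners_def)
next
  case (Suc m)
  define f where "f i = (frob_b lam i, frob_a lam i + 1)" for i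
  have "frobenius_corners lam = f (Suc m) # map f (rev [1..<Suc m])"
    by (simp add: frobenius_corners_def f_def Suc)
  then show ?thesis
    using corner_word_map_rev_upt[of f m "[(n, n)]"]
    by (simp add: corner_path_def mbp_word_def Let_def Suc f_def)
qed

lemma frobenius_corners_mem_corner_lists:
  assumes "modified_balanced n lam"
  shows "frobenius_corners lam \<in> corner_lists n"
proof -
  have part: "is_partition lam" and len: "length lam = n"
    and balanced: "\<And>i. 1 \<le> i \<Longrightarrow> i \<le> durfee lam \<Longrightarrow> frob_a lam i < frob_b lam i"
    using assms by (simp_all add: modified_balanced_iff_frobenius)
  have "strict_chain (0, 0) (frobenius_corners lam)"
    unfolding frobenius_corners_def strict_chain_map_rev_upt
    using balanced[of "durfee lam"] frob_strict_antimono[OF part] by fastforce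
  moreover have "frob_b lam i < n" if "1 \<le> i" and "i \<le> durfee lam" for i
    using that conjpart_le_length[of lam i] durfee_le_length[of lam] len
    unfolding frob_b_def by linarith
  ultimately show ?thesis
    unfolding corner_lists_def frobenius_corners_def using balanced by fastforce
qed

lemma inj_on_frobenius_corners: "inj_on frobenius_corners {lam. modified_balanced n lam}"
proof (rule inj_onI)
  fix lam mu
  assume "lam \<in> {lam. modified_balanced n lam}" and "mu \<in> {lam. modified_balanced n lam}"
    and corners: "frobenius_corners lam = frobenius_corners mu"
  then have "is_partition lam" "is_partition mu" "length lam = length mu"
    by (simp_all add: modified_balanced_iff_frobenius)
  moreover have durfee: "durfee lam = durfee mu"
    using arg_cong[OF corners, of length] by (simp add: frobenius_corners_def del: upt_Suc)
  moreover have "frob_a lam i = frob_a mu i \<and> frob_b lam i = frob_b mu i"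
    if "1 \<le> i" and "i \<le> durfee lam" for i
    using corners that durfee by (auto simp: frobenius_corners_def map_eq_conv)
  ultimately show "lam = mu"
    by (rule partition_eqI_frobenius)
qed

lemma frobenius_corners_surj:
  assumes "vs \<in> corner_lists n"
  obtains lam where "modified_balanced n lam" and "frobenius_corners lam = vs"
proof -
  define l where "l = length vs"
  define f where "f i = vs ! (l - i)" for i
  have vs: "vs = map f (rev [1..<Suc l])"
    by (rule nth_equalityI) (simp_all add: f_def l_def rev_nth del: upt_Suc)
  have chain: "strict_chain (0, 0) vs" and region: "\<And>v. v \<in> set vs \<Longrightarrow> snd v \<le> fst v \<and> fst v < n"
    using assms by (simp_all add: corner_lists_def)
  have mem: "f i \<in> set vs" if "1 \<le> i" and "i \<le> l" for i
    using that by (simp add: f_def l_def)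
  have pos: "0 < snd (f i)" if "1 \<le> i" and "i \<le> l" for i
    using strict_chain_mem[OF chain mem[OF that]] by simp
  have step: "fst (f (Suc i)) < fst (f i) \<and> snd (f (Suc i)) < snd (f i)" if "1 \<le> i" and "i < l" for i
    using chain that unfolding vs strict_chain_map_rev_upt by blast
  have decreasing: "snd (f (Suc i)) - 1 < snd (f i) - 1 \<and> fst (f (Suc i)) < fst (f i)"
    if "1 \<le> i" and "i < l" for i
    using step[OF that] pos[of "Suc i"] that by (auto intro: diff_less_mono)
  have leg: "fst (f 1) < n" if "0 < l"
    using region[OF mem[of 1]] that by simp
  obtain lam where part: "is_partition lam" and len: "length lam = n"
    and durfee: "durfee lam = l"
    and frob: "\<And>i. 1 \<le> i \<Longrightarrow> i \<le> l \<Longrightarrow> frob_a lam i = snd (f i) - 1 \<and> frob_b lam i = fst (f i)"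
    using partition_with_frobenius_coordinates[where a = "\<lambda>i. snd (f i) - 1" and b = "\<lambda>i. fst (f i)",
        OF decreasing leg] by blast
  have "frob_a lam i < frob_b lam i" if "1 \<le> i" and "i \<le> durfee lam" for i
    using frob[of i] region[OF mem[of i]] pos[of i] that durfee by fastforce
  then have "modified_balanced n lam"
    using part len by (simp add: modified_balanced_iff_frobenius)
  moreover have "frobenius_corners lam = vs"
    unfolding frobenius_corners_def durfee vs using frob pos by (auto simp: prod_eq_iff)
  ultimately show ?thesis
    using that by blast
qed

lemma bij_betw_frobenius_corners:
  "bij_betw frobenius_corners {lam. modified_balanced n lam} (corner_lists n)"
proof (rule bij_betw_imageI)
  show "frobenius_corners ` {lam. modified_balanced n lam} = corner_lists n"
    using frobenius_corners_mem_corner_lists by (blast elim: frobenius_corners_surj)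
qed (rule inj_on_frobenius_corners)

theorem mainTheorem5:
  fixes n :: nat
  assumes "n \<ge> 1"
  shows "real (card {lam. modified_balanced n lam}) = real ((2 * n) choose n) / real (n + 1)
         \<and> bij_betw (mbp_word n) {lam. modified_balanced n lam} {w. dyck_path n w}"
proof -
  have "mbp_word n = corner_path n \<circ> frobenius_corners"
    by (simp add: fun_eq_iff mbp_word_eq_corner_path)
  then have bij: "bij_betw (mbp_word n) {lam. modified_balanced n lam} {w. dyck_path n w}"
    using bij_betw_trans[OF bij_betw_frobenius_corners bij_betw_corner_path[OF assms]] by simp
  then show ?thesis
    using bij_betw_same_card card_dyck_paths[OF assms] by metis
qed

end
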